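(* Let $n\ge 4$, $N=\{1,\dots,n\}$, fix distinct $i_1,i_2\in N$ and let $\hat N^c=N\setminus\{i_1,i_2\}$. Then the inequality $$x_{i_2i_1}+\sum_{j\in\hat N^c}\left(x_{i_1j}+x_{ji_2}\right)-x_{i_1i_2}-\sum_{j,j'\in\hat N^c:\,j\ne j'} x_{jj'}\le 2-\frac{(n-4)(n-5)}{2}$$ is a valid inequality for the weak order polytope $P^n_{WO}$, i.e. it holds for every point $x\in P^n_{WO}$.
   Context: Let $N=\{1,\dots,n\}$ and $A_N=\{(i,j): i,j\in N, i\ne j\}$. A weak order on $N$ is a binary relation $W\subseteq N\times N$ that is reflexive, transitive and total; $(i,j)\in W$ is read "$i$ is preferred over or tied with $j$". The characteristic vector of $W$ is $x^W\in\{0,1\}^{A_N}$ with $x^W_{(i,j)}=1$ if $(i,j)\in W$ and $0$ otherwise. The weak order polytope $P^n_{WO}$ is the convex hull of the characteristic vectors of all weak orders on $N$; its points are vectors $x\in\mathbb{R}^{A_N}$ and $x_{ij}$ denotes the coordinate $x_{(i,j)}$. *)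

theory Defs
  imports "HOL-Analysis.Analysis"
begin

definition arcs :: "nat \<Rightarrow> (nat \<times> nat) set" where
  "arcs n = {(i, j). i \<in> {1..n} \<and> j \<in> {1..n} \<and> i \<noteq> j}"

definition weak_order_on :: "nat set \<Rightarrow> (nat \<times> nat) set \<Rightarrow> bool" where
  "weak_order_on N W \<longleftrightarrow> W \<subseteq> N \<times> N \<and> refl_on N W \<and> trans W \<and> total_on N W"

text \<open>Points of R^{A_N} are modelled as functions on nat \<times> nat that vanish outside A_N.\<close>
definition char_vec :: "nat \<Rightarrow> (nat \<times> nat) set \<Rightarrow> (nat \<times> nat \<Rightarrow> real)" where
  "char_vec n W = (\<lambda>a. if a \<in> arcs n \<and> a \<in> W then 1 else 0)"

text \<open>Convex hull of a set of functions (the function space is not a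
  real_vector instance in the library, so we spell out the convex hull as
  the set of finite convex combinations).\<close>
definition conv_hull_fun :: "('a \<Rightarrow> real) set \<Rightarrow> ('a \<Rightarrow> real) set" where
  "conv_hull_fun S = {y. \<exists>T u. finite T \<and> T \<subseteq> S \<and> (\<forall>v\<in>T. u v \<ge> 0) \<and> sum u T = 1
                          \<and> y = (\<lambda>a. \<Sum>v\<in>T. u v * v a)}"

definition weak_order_polytope :: "nat \<Rightarrow> (nat \<times> nat \<Rightarrow> real) set" where
  "weak_order_polytope n =
     conv_hull_fun {char_vec n W | W. weak_order_on {1..n} W}"

end

theory Submission
  imports Defs
begin

text \<open>The left-hand side is linear, so it suffices to bound it at the characteristic vector
  of a weak order \<open>W\<close>. Put \<open>m = n - 2\<close> and let \<open>K\<close> be the set of those \<open>j\<close> outside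
  \<open>{i1, i2}\<close> with \<open>i1 \<succeq> j \<succeq> i2\<close>. The terms \<open>x(i1,j) + x(j,i2)\<close> sum to at most \<open>m + |K|\<close>, and
  by totality the pair terms sum to \<open>(m(m-1) + t)/2\<close>, where \<open>t\<close> counts the ordered tied pairs.
  The bound then reduces to \<open>x(i2,i1) - x(i1,i2) + |K| - t/2 \<le> m - 1\<close>: if \<open>i2\<close> strictly beats
  \<open>i1\<close> then \<open>K = {}\<close>; if \<open>i1\<close> strictly beats \<open>i2\<close> the term \<open>x(i1,i2) = 1\<close> pays for \<open>|K| \<le> m\<close>;
  and if they are tied, all of \<open>K\<close> is tied as well, so \<open>t \<ge> |K|(|K|-1)\<close>.\<close>

definition off_diagonal :: "'a set \<Rightarrow> ('a \<times> 'a) set" where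
  "off_diagonal S = {(a, b). a \<in> S \<and> b \<in> S \<and> a \<noteq> b}"

lemma finite_off_diagonal: "finite S \<Longrightarrow> finite (off_diagonal S)"
  by (rule finite_subset[of _ "S \<times> S"]) (auto simp: off_diagonal_def)

lemma card_off_diagonal:
  assumes "finite S"
  shows "card (off_diagonal S) = card S * (card S - 1)"
proof -
  have diagonal: "Id_on S = (\<lambda>a. (a, a)) ` S"
    by auto
  then have "card (Id_on S) = card S"
    by (simp add: card_image inj_on_def)
  moreover have "off_diagonal S = S \<times> S - Id_on S" and "Id_on S \<subseteq> S \<times> S"
    by (auto simp: off_diagonal_def)
  ultimately show ?thesis
    using assms diagonal
    by (simp add: card_Diff_subset card_cartesian_product diff_mult_distrib2)
qed

lemma card_off_diagonal_total:
  assumes "finite S" and "total_on S W"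
  shows "2 * card (off_diagonal S \<inter> W) = card (off_diagonal S) + card (off_diagonal S \<inter> W \<inter> W\<inverse>)"
proof -
  let ?A = "off_diagonal S"
  have fin: "finite ?A"
    using assms(1) by (rule finite_off_diagonal)
  have "?A \<inter> W\<inverse> = prod.swap ` (?A \<inter> W)"
    by (force simp: off_diagonal_def)
  then have "card (?A \<inter> W\<inverse>) = card (?A \<inter> W)"
    by (simp add: card_image)
  moreover have "(?A \<inter> W) \<union> (?A \<inter> W\<inverse>) = ?A"
    using assms(2) by (auto simp: off_diagonal_def total_on_def)
  moreover have "(?A \<inter> W) \<inter> (?A \<inter> W\<inverse>) = ?A \<inter> W \<inter> W\<inverse>"
    by blast
  ultimately show ?thesis
    using card_Un_Int[of "?A \<inter> W" "?A \<inter> W\<inverse>"] fin by simp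
qed

lemma double_le_mult_pred_add_two: "2 * k \<le> k * (k - 1) + (2::nat)"
proof (cases "k \<le> 1")
  case False
  then have "2 * (k - 1) \<le> k * (k - 1)"
    by (intro mult_right_mono) auto
  then show ?thesis
    using False by arith
qed auto

lemma conv_hull_fun_le:
  assumes x: "x \<in> conv_hull_fun S"
    and linear: "\<And>T u. finite T \<Longrightarrow> f (\<lambda>a. \<Sum>v\<in>T. u v * v a) = (\<Sum>v\<in>T. u v * f v)"
    and bound: "\<And>v. v \<in> S \<Longrightarrow> f v \<le> B"
  shows "f x \<le> B"
proof -
  obtain T u where T: "finite T" "T \<subseteq> S" and u: "\<forall>v\<in>T. u v \<ge> 0" "sum u T = 1"
    and x_eq: "x = (\<lambda>a. \<Sum>v\<in>T. u v * v a)"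
    using x unfolding conv_hull_fun_def by blast
  have "f x = (\<Sum>v\<in>T. u v * f v)"
    using linear T(1) x_eq by simp
  also have "\<dots> \<le> (\<Sum>v\<in>T. u v * B)"
    using T(2) u(1) bound by (intro sum_mono mult_left_mono) auto
  also have "\<dots> = B"
    using u(2) by (simp add: sum_distrib_right[symmetric])
  finally show ?thesis .
qed

definition ineq_lhs :: "nat \<Rightarrow> nat \<Rightarrow> nat \<Rightarrow> (nat \<times> nat \<Rightarrow> real) \<Rightarrow> real" where
  "ineq_lhs n i1 i2 x =
     x (i2, i1) + (\<Sum>j\<in>{1..n} - {i1, i2}. x (i1, j) + x (j, i2)) - x (i1, i2)
     - (\<Sum>(j, j')\<in>off_diagonal ({1..n} - {i1, i2}). x (j, j'))"

lemma ineq_lhs_convex_combination: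
  "ineq_lhs n i1 i2 (\<lambda>a. \<Sum>v\<in>T. u v * v a) = (\<Sum>v\<in>T. u v * ineq_lhs n i1 i2 v)"
  unfolding ineq_lhs_def
  by (simp add: case_prod_beta' sum.distrib sum_subtractf sum_distrib_left algebra_simps
      sum.swap[of _ T])

lemma char_vec_arc: "a \<in> arcs n \<Longrightarrow> char_vec n W a = of_bool (a \<in> W)"
  by (simp add: char_vec_def)

lemma sum_char_vec_off_diagonal:
  assumes S: "S \<subseteq> {1..n}" and total: "total_on S W"
  shows "2 * (\<Sum>(j, j')\<in>off_diagonal S. char_vec n W (j, j'))
           = real (card S) * (real (card S) - 1) + real (card (off_diagonal S \<inter> W \<inter> W\<inverse>))"
proof -
  have fin: "finite S"
    using S finite_subset by blast
  have "(\<Sum>(j, j')\<in>off_diagonal S. char_vec n W (j, j'))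
      = (\<Sum>p\<in>off_diagonal S. of_bool (p \<in> W))"
    using S by (intro sum.cong) (force simp: char_vec_def arcs_def off_diagonal_def)+
  also have "\<dots> = real (card (off_diagonal S \<inter> W))"
    using fin by (simp add: finite_off_diagonal Int_def)
  finally have pair_sum:
    "(\<Sum>(j, j')\<in>off_diagonal S. char_vec n W (j, j')) = real (card (off_diagonal S \<inter> W))" .
  have "real (2 * card (off_diagonal S \<inter> W))
      = real (card S * (card S - 1) + card (off_diagonal S \<inter> W \<inter> W\<inverse>))"
    by (simp only: card_off_diagonal_total[OF fin total] card_off_diagonal[OF fin])
  then show ?thesis
    unfolding pair_sum by (cases "card S") (simp_all add: algebra_simps)
qed

lemma interval_card_le_ties:
  fixes W :: "'a rel" and a b :: 'a
  assumes fin: "finite S" and S2: "2 \<le> card S" and trans: "trans W"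
  defines "K \<equiv> {j \<in> S. (a, j) \<in> W \<and> (j, b) \<in> W}"
  shows "of_bool ((b, a) \<in> W) - of_bool ((a, b) \<in> W) + real (card K)
           - real (card (off_diagonal S \<inter> W \<inter> W\<inverse>)) / 2 \<le> real (card S) - 1"
proof (cases "(a, b) \<in> W")
  case False
  then have "K = {}"
    using trans by (auto simp: K_def dest: transD)
  then show ?thesis
    using False S2 by simp
next
  case ab: True
  show ?thesis
  proof (cases "(b, a) \<in> W")
    case False
    have "card K \<le> card S"
      unfolding K_def using fin by (intro card_mono) auto
    then show ?thesis
      using ab False by simp
  next
    case True
    have tied: "(j, j') \<in> W" if "j \<in> K" "j' \<in> K" for j j'
    proof -
      have "(j, b) \<in> W" "(b, a) \<in> W" "(a, j') \<in> W"
        using that True by (auto simp: K_def)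
      then show ?thesis
        using trans by (meson transD)
    qed
    have "K \<subseteq> S"
      by (simp add: K_def)
    with tied have "off_diagonal K \<subseteq> off_diagonal S \<inter> W \<inter> W\<inverse>"
      by (auto simp: off_diagonal_def)
    then have "card (off_diagonal K) \<le> card (off_diagonal S \<inter> W \<inter> W\<inverse>)"
      using fin by (intro card_mono) (simp_all add: finite_off_diagonal)
    then have "card K * (card K - 1) \<le> card (off_diagonal S \<inter> W \<inter> W\<inverse>)"
      using fin by (simp add: K_def card_off_diagonal)
    then have "2 * card K \<le> card (off_diagonal S \<inter> W \<inter> W\<inverse>) + 2"
      using double_le_mult_pred_add_two[of "card K"] by linarith
    then show ?thesis
      using ab True S2 by simp
  qed
qed

lemma ineq_lhs_char_vec_le:
  assumes n: "n \<ge> 4" and i1: "i1 \<in> {1..n}" and i2: "i2 \<in> {1..n}" and "i1 \<noteq> i2"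
    and W: "weak_order_on {1..n} W"
  shows "ineq_lhs n i1 i2 (char_vec n W) \<le> 2 - (real n - 4) * (real n - 5) / 2"
proof -
  define Nc where "Nc = {1..n} - {i1, i2}"
  define K where "K = {j \<in> Nc. (i1, j) \<in> W \<and> (j, i2) \<in> W}"
  define v where "v = char_vec n W"
  define m where "m = card Nc"
  have trans: "trans W" and total: "total_on {1..n} W"
    using W by (auto simp: weak_order_on_def)
  have fin: "finite Nc" and Nc_sub: "Nc \<subseteq> {1..n}"
    by (auto simp: Nc_def)
  have "m = n - 2"
    using i1 i2 \<open>i1 \<noteq> i2\<close> by (simp add: m_def Nc_def card_Diff_subset)
  then have n_eq: "real n = real m + 2" and m2: "m \<ge> 2"
    using n by auto
  have "(\<Sum>j\<in>Nc. v (i1, j) + v (j, i2)) \<le> (\<Sum>j\<in>Nc. 1 + of_bool (j \<in> K))"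
    using i1 i2 by (intro sum_mono) (auto simp: v_def char_vec_arc arcs_def Nc_def K_def)
  also have "\<dots> = real m + real (card K)"
    using fin by (simp add: sum.distrib m_def K_def Int_def)
  finally have star_sum: "(\<Sum>j\<in>Nc. v (i1, j) + v (j, i2)) \<le> real m + real (card K)" .
  have "ineq_lhs n i1 i2 v
      = of_bool ((i2, i1) \<in> W) - of_bool ((i1, i2) \<in> W) + (\<Sum>j\<in>Nc. v (i1, j) + v (j, i2))
        - (\<Sum>(j, j')\<in>off_diagonal Nc. v (j, j'))"
    using i1 i2 \<open>i1 \<noteq> i2\<close> by (simp add: ineq_lhs_def Nc_def v_def char_vec_arc arcs_def)
  also have "\<dots> \<le> 2 * real m - 1 - real m * (real m - 1) / 2"
    using interval_card_le_ties[OF fin m2[unfolded m_def] trans, where a = i1 and b = i2] star_sum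
      sum_char_vec_off_diagonal[OF Nc_sub total_on_subset[OF total Nc_sub]]
    unfolding m_def K_def v_def by linarith
  also have "\<dots> = 2 - (real n - 4) * (real n - 5) / 2"
    unfolding n_eq by (simp add: field_simps)
  finally show ?thesis
    by (simp add: v_def)
qed

theorem mainTheorem2:
  fixes n i1 i2 :: nat and x :: "nat \<times> nat \<Rightarrow> real"
  assumes "n \<ge> 4"
    and "i1 \<in> {1..n}" and "i2 \<in> {1..n}" and "i1 \<noteq> i2"
    and "x \<in> weak_order_polytope n"
  shows "x (i2, i1)
           + (\<Sum>j\<in>{1..n} - {i1, i2}. x (i1, j) + x (j, i2))
           - x (i1, i2)
           - (\<Sum>(j, j')\<in>{(j, j'). j \<in> {1..n} - {i1, i2} \<and> j' \<in> {1..n} - {i1, i2} \<and> j \<noteq> j'}. x (j, j'))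
         \<le> 2 - (real n - 4) * (real n - 5) / 2"
proof -
  have "ineq_lhs n i1 i2 x \<le> 2 - (real n - 4) * (real n - 5) / 2"
    using assms(5) unfolding weak_order_polytope_def
    by (rule conv_hull_fun_le)
      (use ineq_lhs_char_vec_le[OF assms(1-4)] in \<open>auto simp: ineq_lhs_convex_combination\<close>)
  then show ?thesis
    unfolding ineq_lhs_def off_diagonal_def .
qed

end
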